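(* For any extended string $h\in \mathcal{L}_e(M)$, let $\beta=\mathsf{tam}(h)$ and $(q,\tilde{q},z)=f(h)$. Then $\mathcal{E}_{S/G}^C(\beta)=\mathsf{UR}_{\Delta_H(z)}(q)$.
   Context: Let $G=(X,\Sigma,\delta,X_0)$ be a finite-state automaton (partial transition function $\delta$, set of initial states $X_0$), with $\Sigma=\Sigma_o\dot\cup\Sigma_{uo}=\Sigma_c\dot\cup\Sigma_{uc}$ (observable/unobservable, controllable/uncontrollable events), and natural projection $P:\Sigma^*\to\Sigma_o^*$. For a state $x$ of an automaton, $\Delta(x)$ denotes the set of events defined at $x$. A partial-observation supervisor $S:P(\mathcal{L}(G))\to\Gamma$ (with $\Gamma=\{\gamma\subseteq\Sigma:\Sigma_{uc}\subseteq\gamma\}$) is realized by a deterministic automaton $H=(Z,\Sigma,\xi,z_0)$ that changes state only on observable events and satisfies $\Delta_H(\xi(z_0,s))=S(P(s))$ for all $s\in\mathcal{L}(S/G)$, where $\mathcal{L}(S/G)$ is the closed-loop language (union over $x_0\in X_0$ of strings generated from $x_0$ with each event enabled by $S$ at the observation of the preceding prefix). For $q\subseteq X$, $\gamma\subseteq\Sigma$, $\sigma\in\Sigma_o$: $\mathsf{UR}_\gamma(q)=\{\delta(x,s):x\in q,s\in(\Sigma_{uo}\cap\gamma)^*\}$, $\mathsf{NX}_\sigma(q)=\{\delta(x,\sigma):x\in q\}$, $\mathsf{NX}_\epsilon(q)=q$, and $\mathcal{O}(q,\gamma)=\{\sigma\in\Sigma_o\cap\gamma:\exists x\in q,w\in(\Sigma_{uo}\cap\gamma)^*,\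 \delta(x,w\sigma)\text{ defined}\}$. The supervisor's current-state estimate after observation $\alpha\in P(\mathcal{L}(S/G))$ is $\mathcal{E}^C_{S/G}(\alpha)=\{\delta(x_0,s):x_0\in X_0,s\in\mathcal{L}(S/G,x_0),P(s)=\alpha\}$ (empty if $\alpha\notin P(\mathcal{L}(S/G))$). The augmented system $\tilde G$ has states $\tilde X\subseteq X_0\times X$, initial states $\tilde X_0=\{(x_0,x_0):x_0\in X_0\}$ and $\tilde\delta((x_0,x),\sigma)=(x_0,\delta(x,\sigma))$; $\widetilde{\mathsf{UR}},\widetilde{\mathsf{NX}}$ denote the same operators on $\tilde G$. A set $\Sigma_v\subseteq\Sigma_o$ of vulnerable events is given; for $\sigma\in\Sigma_o$, the attacker action set is $\mathcal{V}(\sigma)=\{\hat\sigma':\sigma'\in\Sigma_v\}\cup\{\hat\epsilon\}$ if $\sigma\in\Sigma_v$ and $\mathcal{V}(\sigma)=\{\hat\sigma\}$ otherwise (hatted events denote tampered observations). The All Attack Structure is $M=(Q,\Sigma_M,f,q_0)$ with $Q=Q_e\dot\cup Q_a$, environment states $Q_e\subseteq 2^X\times2^{\tilde X}\times(Z\cup\{z_{\mathsf{att}}\})$, attack states $Q_a\subseteq 2^X\times2^{\tilde X}\times Z\times\Sigma_o$, initial state $q_0=(X_0,\tilde X_0,z_0)$, events $\Sigma_M=\Sigma_o\cup\hat\Sigma_o^\epsilon$, and $\Delta_H(z_{\mathsf{att}})=\emptyset$. Transitions: from $q_e=(q,\tilde q,z)\in Q_e$, the enabled events are $\mathcal{O}(\tilde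 q,\Delta_H(z))$ if $z\in Z$ and none if $z=z_{\mathsf{att}}$, with $f(q_e,\sigma)=(q,\tilde q,z,\sigma)$; from $q_a=(q,\tilde q,z,\sigma)$, the enabled events are $\mathcal{V}(\sigma)$, and for $\hat\sigma_a\in\mathcal{V}(\sigma)$, $f(q_a,\hat\sigma_a)=(q',\tilde q',z')$ with $q'=\mathsf{NX}_{\sigma_a}(\mathsf{UR}_{\Delta_H(z)}(q))$, $\tilde q'=\widetilde{\mathsf{NX}}_{\sigma}(\widetilde{\mathsf{UR}}_{\Delta_H(z)}(\tilde q))$, and $z'=\xi(z,\sigma_a)$ if $q'\neq\emptyset$, $z'=z_{\mathsf{att}}$ if $q'=\emptyset$. $\mathcal{L}_e(M)$ is the set of strings of $M$ ending in an environment state; for $h=\sigma_1\hat\sigma_{a1}\cdots\sigma_n\hat\sigma_{an}\in\mathcal{L}_e(M)$, $\mathsf{tam}(h)=\sigma_{a1}\cdots\sigma_{an}$ (hats removed, $\hat\epsilon$ becoming $\epsilon$), i.e., the tampered observation received by the supervisor. *)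

theory Defs
  imports Main
begin

fun dstar :: "('s \<Rightarrow> 'e \<Rightarrow> 's option) \<Rightarrow> 's \<Rightarrow> 'e list \<Rightarrow> 's option" where
  "dstar d x [] = Some x"
| "dstar d x (e # s) = (case d x e of None \<Rightarrow> None | Some y \<Rightarrow> dstar d y s)"

definition proj :: "'e set \<Rightarrow> 'e list \<Rightarrow> 'e list" where
  "proj Sigo s = filter (\<lambda>e. e \<in> Sigo) s"

definition gen_lang :: "('x \<Rightarrow> 'e \<Rightarrow> 'x option) \<Rightarrow> 'x set \<Rightarrow> 'e list set" where
  "gen_lang d X0 = {s. \<exists>x0\<in>X0. dstar d x0 s \<noteq> None}"

definition closed_loop :: "('x \<Rightarrow> 'e \<Rightarrow> 'x option) \<Rightarrow> 'e set \<Rightarrow> ('e list \<Rightarrow> 'e set) \<Rightarrow> 'x \<Rightarrow> 'e list set" where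
  "closed_loop d Sigo S x0 =
     {s. dstar d x0 s \<noteq> None \<and> (\<forall>i<length s. s ! i \<in> S (proj Sigo (take i s)))}"

definition CL_lang :: "('x \<Rightarrow> 'e \<Rightarrow> 'x option) \<Rightarrow> 'e set \<Rightarrow> ('e list \<Rightarrow> 'e set) \<Rightarrow> 'x set \<Rightarrow> 'e list set" where
  "CL_lang d Sigo S X0 = (\<Union>x0\<in>X0. closed_loop d Sigo S x0)"

definition est :: "('x \<Rightarrow> 'e \<Rightarrow> 'x option) \<Rightarrow> 'e set \<Rightarrow> ('e list \<Rightarrow> 'e set) \<Rightarrow> 'x set \<Rightarrow> 'e list \<Rightarrow> 'x set" where
  "est d Sigo S X0 \<alpha> =
     {y. \<exists>x0\<in>X0. \<exists>s\<in>closed_loop d Sigo S x0. proj Sigo s = \<alpha> \<and> dstar d x0 s = Some y}"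

definition UR :: "('s \<Rightarrow> 'e \<Rightarrow> 's option) \<Rightarrow> 'e set \<Rightarrow> 'e set \<Rightarrow> 's set \<Rightarrow> 's set" where
  "UR d Siguo \<gamma> q = {y. \<exists>x\<in>q. \<exists>s. set s \<subseteq> Siguo \<inter> \<gamma> \<and> dstar d x s = Some y}"

definition NX :: "('s \<Rightarrow> 'e \<Rightarrow> 's option) \<Rightarrow> 'e \<Rightarrow> 's set \<Rightarrow> 's set" where
  "NX d \<sigma> q = {y. \<exists>x\<in>q. d x \<sigma> = Some y}"

text \<open>NX for an observable event or epsilon (None = epsilon, NX_epsilon(q) = q).\<close>
definition NXo :: "('s \<Rightarrow> 'e \<Rightarrow> 's option) \<Rightarrow> 'e option \<Rightarrow> 's set \<Rightarrow> 's set" where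
  "NXo d a q = (case a of None \<Rightarrow> q | Some \<sigma> \<Rightarrow> NX d \<sigma> q)"

definition Oen :: "('s \<Rightarrow> 'e \<Rightarrow> 's option) \<Rightarrow> 'e set \<Rightarrow> 'e set \<Rightarrow> 's set \<Rightarrow> 'e set \<Rightarrow> 'e set" where
  "Oen d Sigo Siguo q \<gamma> =
     {\<sigma> \<in> Sigo \<inter> \<gamma>. \<exists>x\<in>q. \<exists>w. set w \<subseteq> Siguo \<inter> \<gamma> \<and> dstar d x (w @ [\<sigma>]) \<noteq> None}"

text \<open>Augmented system: states (x0, x), transition on the second component.\<close>
definition aug :: "('x \<Rightarrow> 'e \<Rightarrow> 'x option) \<Rightarrow> ('x \<times> 'x) \<Rightarrow> 'e \<Rightarrow> ('x \<times> 'x) option" where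
  "aug d p \<sigma> = map_option (\<lambda>y. (fst p, y)) (d (snd p) \<sigma>)"

definition DeltaH :: "('z \<Rightarrow> 'e \<Rightarrow> 'z option) \<Rightarrow> 'z \<Rightarrow> 'e set" where
  "DeltaH xi z = {e. xi z e \<noteq> None}"

text \<open>Third component of environment states: \<open>Some z\<close> for z in Z, \<open>None\<close> for z_att,
  with Delta_H(z_att) = {}.\<close>
definition DeltaHo :: "('z \<Rightarrow> 'e \<Rightarrow> 'z option) \<Rightarrow> 'z option \<Rightarrow> 'e set" where
  "DeltaHo xi zo = (case zo of None \<Rightarrow> {} | Some z \<Rightarrow> DeltaH xi z)"

datatype ('x, 'z, 'e) mstate =
    Env "'x set" "('x \<times> 'x) set" "'z option"
  | Att "'x set" "('x \<times> 'x) set" 'z 'e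

text \<open>Events of M: \<open>Obs \<sigma>\<close> is sigma in Sigma_o; \<open>Hat (Some \<sigma>)\<close> is the tampered observation
  hat sigma, \<open>Hat None\<close> is hat epsilon.\<close>
datatype 'e mevent = Obs 'e | Hat "'e option"

definition attV :: "'e set \<Rightarrow> 'e \<Rightarrow> 'e mevent set" where
  "attV Sigv \<sigma> = (if \<sigma> \<in> Sigv then (\<lambda>a. Hat (Some a)) ` Sigv \<union> {Hat None} else {Hat (Some \<sigma>)})"

fun fM :: "('x \<Rightarrow> 'e \<Rightarrow> 'x option) \<Rightarrow> 'e set \<Rightarrow> 'e set \<Rightarrow> 'e set \<Rightarrow> ('z \<Rightarrow> 'e \<Rightarrow> 'z option)
           \<Rightarrow> ('x, 'z, 'e) mstate \<Rightarrow> 'e mevent \<Rightarrow> ('x, 'z, 'e) mstate option" where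
  "fM d Sigo Siguo Sigv xi (Env q qt (Some z)) (Obs \<sigma>) =
     (if \<sigma> \<in> Oen (aug d) Sigo Siguo qt (DeltaH xi z) then Some (Att q qt z \<sigma>) else None)"
| "fM d Sigo Siguo Sigv xi (Att q qt z \<sigma>) (Hat a) =
     (if Hat a \<in> attV Sigv \<sigma> then
        (let q' = NXo d a (UR d Siguo (DeltaH xi z) q);
             qt' = NX (aug d) \<sigma> (UR (aug d) Siguo (DeltaH xi z) qt)
         in if q' = {} then Some (Env q' qt' None)
            else (case a of
                    None \<Rightarrow> Some (Env q' qt' (Some z))
                  | Some \<sigma>a \<Rightarrow> map_option (\<lambda>z'. Env q' qt' (Some z')) (xi z \<sigma>a)))
      else None)"
| "fM d Sigo Siguo Sigv xi _ _ = None"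

definition M_init :: "'x set \<Rightarrow> 'z \<Rightarrow> ('x, 'z, 'e) mstate" where
  "M_init X0 z0 = Env X0 ((\<lambda>x. (x, x)) ` X0) (Some z0)"

definition fMh :: "('x \<Rightarrow> 'e \<Rightarrow> 'x option) \<Rightarrow> 'e set \<Rightarrow> 'e set \<Rightarrow> 'e set \<Rightarrow> ('z \<Rightarrow> 'e \<Rightarrow> 'z option)
           \<Rightarrow> 'x set \<Rightarrow> 'z \<Rightarrow> 'e mevent list \<Rightarrow> ('x, 'z, 'e) mstate option" where
  "fMh d Sigo Siguo Sigv xi X0 z0 h = dstar (fM d Sigo Siguo Sigv xi) (M_init X0 z0) h"

definition Le_M :: "('x \<Rightarrow> 'e \<Rightarrow> 'x option) \<Rightarrow> 'e set \<Rightarrow> 'e set \<Rightarrow> 'e set \<Rightarrow> ('z \<Rightarrow> 'e \<Rightarrow> 'z option)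
           \<Rightarrow> 'x set \<Rightarrow> 'z \<Rightarrow> 'e mevent list set" where
  "Le_M d Sigo Siguo Sigv xi X0 z0 =
     {h. \<exists>q qt zo. fMh d Sigo Siguo Sigv xi X0 z0 h = Some (Env q qt zo)}"

definition tam :: "'e mevent list \<Rightarrow> 'e list" where
  "tam h = concat (map (\<lambda>ev. case ev of Hat (Some a) \<Rightarrow> [a] | _ \<Rightarrow> []) h)"

end

theory Submission
  imports Defs
begin

(* At an environment state (q, qt, z) reached with tampered observation
   beta, the invariant is: E(beta) = UR_{Delta_H(z)}(q), and H reaches z on reading beta.
   Since H self-loops on unobservable events, the state H reaches on a closed-loop string s
   is the state it reaches on P(s); so by the realisation property Delta_H(z) = S(beta)
   whenever E(beta) is nonempty.  With the recursion E(beta sigma) = UR_{S(beta sigma)}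
   (NX_sigma(E(beta))) for sigma in S(beta), and E(beta sigma) = {} otherwise, every attacker
   move (inserting sigma_a or erasing) preserves the invariant. *)

lemma dstar_append: "dstar d x (s @ t) = Option.bind (dstar d x s) (\<lambda>y. dstar d y t)"
  by (induction s arbitrary: x) (auto split: option.splits)

lemma dstar_snoc: "dstar d x (s @ [e]) = Option.bind (dstar d x s) (\<lambda>y. d y e)"
  by (cases "dstar d x s") (auto simp: dstar_append split: option.splits)

lemma dstar_prefix: "dstar d x (s @ t) \<noteq> None \<Longrightarrow> dstar d x s \<noteq> None"
  by (cases "dstar d x s") (auto simp: dstar_append)

lemma dstar_append_Cons_eq_Some:
  "dstar d x (s @ e # u) = Some y \<longleftrightarrow>
     (\<exists>x1 x2. dstar d x s = Some x1 \<and> d x1 e = Some x2 \<and> dstar d x2 u = Some y)"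
  by (cases "dstar d x s") (auto simp: dstar_append split: option.splits)

lemma dstar_events:
  "(\<And>x e y. d x e = Some y \<Longrightarrow> e \<in> A) \<Longrightarrow> dstar d x s \<noteq> None \<Longrightarrow> set s \<subseteq> A"
  by (induction s arbitrary: x) (auto split: option.splits)

lemma proj_Nil [simp]: "proj A [] = []"
  by (simp add: proj_def)

lemma proj_Cons [simp]: "proj A (e # s) = (if e \<in> A then e # proj A s else proj A s)"
  by (simp add: proj_def)

lemma proj_append [simp]: "proj A (s @ t) = proj A s @ proj A t"
  by (simp add: proj_def)

lemma proj_eq_Nil_iff: "proj A s = [] \<longleftrightarrow> set s \<inter> A = {}"
  by (auto simp: proj_def filter_empty_conv)

lemma proj_eq_snoc_iff:
  "proj A s = \<beta> @ [\<sigma>] \<longleftrightarrow>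
     (\<exists>s1 u. s = s1 @ \<sigma> # u \<and> proj A s1 = \<beta> \<and> \<sigma> \<in> A \<and> set u \<inter> A = {})"
proof
  assume "proj A s = \<beta> @ [\<sigma>]"
  then have "filter (\<lambda>e. e \<in> A) (rev s) = \<sigma> # rev \<beta>"
    by (simp add: proj_def rev_filter[symmetric])
  then obtain us vs where "rev s = us @ \<sigma> # vs" "\<forall>u\<in>set us. u \<notin> A" "\<sigma> \<in> A"
    "rev \<beta> = filter (\<lambda>e. e \<in> A) vs"
    unfolding filter_eq_Cons_iff by blast
  then show "\<exists>s1 u. s = s1 @ \<sigma> # u \<and> proj A s1 = \<beta> \<and> \<sigma> \<in> A \<and> set u \<inter> A = {}"
    by (intro exI[of _ "rev vs"] exI[of _ "rev us"])
      (auto simp: proj_def rev_filter rev_swap disjoint_iff)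
qed (auto simp: proj_def filter_empty_conv disjoint_iff)

lemma closed_loop_Nil: "[] \<in> closed_loop d Sigo S x0"
  by (simp add: closed_loop_def)

lemma closed_loop_snoc:
  "s @ [e] \<in> closed_loop d Sigo S x0 \<longleftrightarrow>
     s \<in> closed_loop d Sigo S x0 \<and> dstar d x0 (s @ [e]) \<noteq> None \<and> e \<in> S (proj Sigo s)"
  by (cases "dstar d x0 s")
    (auto simp: closed_loop_def dstar_snoc nth_append less_Suc_eq proj_def)

lemma closed_loop_append_unobservable:
  assumes "set u \<inter> Sigo = {}"
  shows "s @ u \<in> closed_loop d Sigo S x0 \<longleftrightarrow>
     s \<in> closed_loop d Sigo S x0 \<and> dstar d x0 (s @ u) \<noteq> None \<and> set u \<subseteq> S (proj Sigo s)"
  using assms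
proof (induction u rule: rev_induct)
  case (snoc e u)
  then have "proj Sigo (s @ u) = proj Sigo s"
    by (simp add: proj_eq_Nil_iff)
  with closed_loop_snoc[of "s @ u" e d Sigo S x0] snoc dstar_prefix[of d x0 "s @ u" "[e]"]
  show ?case by auto
qed (auto simp: closed_loop_def)

lemma UR_subset: "q \<subseteq> UR d U g q"
  unfolding UR_def by (auto intro!: exI[of _ "[]"])

lemma UR_idem: "UR d U g (UR d U g q) = UR d U g q"
proof
  show "UR d U g (UR d U g q) \<subseteq> UR d U g q"
  proof
    fix y assume "y \<in> UR d U g (UR d U g q)"
    then obtain x s x' s' where "x \<in> q" "set s \<subseteq> U \<inter> g" "dstar d x s = Some x'"
      "set s' \<subseteq> U \<inter> g" "dstar d x' s' = Some y"
      unfolding UR_def by blast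
    then have "set (s @ s') \<subseteq> U \<inter> g" "dstar d x (s @ s') = Some y"
      by (auto simp: dstar_append)
    with \<open>x \<in> q\<close> show "y \<in> UR d U g q" unfolding UR_def by blast
  qed
qed (rule UR_subset)

lemma UR_empty [simp]: "UR d U g {} = {}"
  unfolding UR_def by auto

lemma UR_eq_empty_iff [simp]: "UR d U g q = {} \<longleftrightarrow> q = {}"
  using UR_subset[of q d U g] by auto

locale partially_observed_plant =
  fixes Sigo Siguo :: "'e set" and d :: "'x \<Rightarrow> 'e \<Rightarrow> 'x option"
  assumes plant_events: "d x e = Some y \<Longrightarrow> e \<in> Sigo \<union> Siguo"
    and observable_disjoint: "Sigo \<inter> Siguo = {}"
begin

lemma unobservable_suffix_iff:
  "dstar d x (s @ u) \<noteq> None \<Longrightarrow> set u \<inter> Sigo = {} \<longleftrightarrow> set u \<subseteq> Siguo"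
proof -
  assume "dstar d x (s @ u) \<noteq> None"
  with dstar_events[of d "Sigo \<union> Siguo"] plant_events have "set u \<subseteq> Sigo \<union> Siguo"
    by (metis Un_subset_iff set_append)
  with observable_disjoint show ?thesis by blast
qed

lemma closed_loop_unobservable_iff:
  "s \<in> closed_loop d Sigo S x0 \<and> proj Sigo s = [] \<longleftrightarrow>
     dstar d x0 s \<noteq> None \<and> set s \<subseteq> Siguo \<inter> S []"
  using closed_loop_append_unobservable[of s Sigo "[]" d S x0] closed_loop_Nil[of d Sigo S x0]
    unobservable_suffix_iff[of x0 "[]" s] by (auto simp: proj_eq_Nil_iff)

lemma est_Nil: "est d Sigo S X0 [] = UR d Siguo (S []) X0"
proof -
  have "(\<exists>s\<in>closed_loop d Sigo S x0. proj Sigo s = [] \<and> dstar d x0 s = Some y) \<longleftrightarrow>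
      (\<exists>s. set s \<subseteq> Siguo \<inter> S [] \<and> dstar d x0 s = Some y)" for x0 y
    using closed_loop_unobservable_iff[of _ S x0] by (metis option.distinct(1))
  then show ?thesis
    unfolding est_def UR_def by blast
qed

lemma closed_loop_observation_snoc_iff:
  assumes "\<sigma> \<in> Sigo"
  shows "s1 @ \<sigma> # u \<in> closed_loop d Sigo S x0 \<and> proj Sigo s1 = \<beta> \<and> set u \<inter> Sigo = {} \<longleftrightarrow>
    s1 \<in> closed_loop d Sigo S x0 \<and> proj Sigo s1 = \<beta> \<and> \<sigma> \<in> S \<beta> \<and>
    dstar d x0 (s1 @ \<sigma> # u) \<noteq> None \<and> set u \<subseteq> Siguo \<inter> S (\<beta> @ [\<sigma>])"
proof -
  have "dstar d x0 (s1 @ \<sigma> # u) \<noteq> None \<Longrightarrow> set u \<inter> Sigo = {} \<longleftrightarrow> set u \<subseteq> Siguo"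
    using unobservable_suffix_iff[of x0 "s1 @ [\<sigma>]" u] by simp
  moreover have "s1 @ \<sigma> # u \<in> closed_loop d Sigo S x0 \<longleftrightarrow>
      s1 \<in> closed_loop d Sigo S x0 \<and> \<sigma> \<in> S (proj Sigo s1) \<and>
      dstar d x0 (s1 @ \<sigma> # u) \<noteq> None \<and> set u \<subseteq> S (proj Sigo s1 @ [\<sigma>])"
    if "set u \<inter> Sigo = {}"
    using closed_loop_append_unobservable[OF that, of "s1 @ [\<sigma>]" d S x0]
      closed_loop_snoc[of s1 \<sigma> d Sigo S x0] dstar_prefix[of d x0 "s1 @ [\<sigma>]" u] assms
    by auto
  ultimately show ?thesis
    by blast
qed

lemma est_snoc:
  assumes "\<sigma> \<in> Sigo"
  shows "est d Sigo S X0 (\<beta> @ [\<sigma>]) =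
    (if \<sigma> \<in> S \<beta> then UR d Siguo (S (\<beta> @ [\<sigma>])) (NX d \<sigma> (est d Sigo S X0 \<beta>)) else {})"
proof -
  have "(\<exists>s. s \<in> closed_loop d Sigo S x0 \<and> proj Sigo s = \<beta> @ [\<sigma>] \<and> dstar d x0 s = Some y)
    \<longleftrightarrow> \<sigma> \<in> S \<beta> \<and> (\<exists>s1 x x' u. s1 \<in> closed_loop d Sigo S x0 \<and> proj Sigo s1 = \<beta> \<and>
      dstar d x0 s1 = Some x \<and> d x \<sigma> = Some x' \<and> set u \<subseteq> Siguo \<inter> S (\<beta> @ [\<sigma>]) \<and>
      dstar d x' u = Some y)" (is "?lhs \<longleftrightarrow> ?rhs") for x0 y
  proof
    assume ?lhs
    then obtain s where s: "s \<in> closed_loop d Sigo S x0" "proj Sigo s = \<beta> @ [\<sigma>]" "dstar d x0 s = Some y"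
      by blast
    then obtain s1 u where "s = s1 @ \<sigma> # u" "proj Sigo s1 = \<beta>" "set u \<inter> Sigo = {}"
      unfolding proj_eq_snoc_iff by blast
    moreover from s this(1) have
      "s1 @ \<sigma> # u \<in> closed_loop d Sigo S x0" "dstar d x0 (s1 @ \<sigma> # u) = Some y"
      by simp_all
    ultimately show ?rhs
      using closed_loop_observation_snoc_iff[OF assms, of s1 u S x0 \<beta>]
      unfolding dstar_append_Cons_eq_Some by blast
  next
    assume ?rhs
    then obtain s1 u where "s1 \<in> closed_loop d Sigo S x0" "proj Sigo s1 = \<beta>" "\<sigma> \<in> S \<beta>"
      "dstar d x0 (s1 @ \<sigma> # u) = Some y" "set u \<subseteq> Siguo \<inter> S (\<beta> @ [\<sigma>])"
      unfolding dstar_append_Cons_eq_Some by blast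
    moreover from this have "set u \<inter> Sigo = {}"
      using observable_disjoint by blast
    ultimately show ?lhs
      using closed_loop_observation_snoc_iff[OF assms, of s1 u S x0 \<beta>] assms
      by (intro exI[of _ "s1 @ \<sigma> # u"]) (simp add: proj_eq_Nil_iff[symmetric])
  qed
  then show ?thesis
    unfolding est_def UR_def NX_def Bex_def by (auto; blast)
qed

end

locale realized_supervisor = partially_observed_plant Sigo Siguo d
  for Sigo Siguo :: "'e set" and d :: "'x \<Rightarrow> 'e \<Rightarrow> 'x option" +
  fixes S :: "'e list \<Rightarrow> 'e set" and X0 :: "'x set"
    and xi :: "'z \<Rightarrow> 'e \<Rightarrow> 'z option" and z0 :: 'z and Z :: "'z set"
  assumes z0_in_Z: "z0 \<in> Z"
    and supervisor_closed: "z \<in> Z \<Longrightarrow> xi z e = Some z' \<Longrightarrow> e \<in> Sigo \<union> Siguo \<and> z' \<in> Z"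
    and supervisor_unobservable_selfloop:
      "z \<in> Z \<Longrightarrow> e \<in> Siguo \<Longrightarrow> xi z e \<noteq> None \<Longrightarrow> xi z e = Some z"
    and supervisor_realizes: "s \<in> CL_lang d Sigo S X0 \<Longrightarrow>
      \<exists>z. dstar xi z0 s = Some z \<and> DeltaH xi z = S (proj Sigo s)"
begin

lemma supervisor_run_proj:
  "z \<in> Z \<Longrightarrow> dstar xi z s = Some z' \<Longrightarrow> dstar xi z (proj Sigo s) = Some z'"
proof (induction s arbitrary: z)
  case (Cons e s)
  then obtain z1 where z1: "xi z e = Some z1" "dstar xi z1 s = Some z'"
    by (auto split: option.splits)
  with Cons.prems supervisor_closed have "z1 \<in> Z" "e \<in> Sigo \<union> Siguo" by blast+
  moreover have "e \<notin> Sigo \<Longrightarrow> z1 = z"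
    using supervisor_unobservable_selfloop[OF Cons.prems(1), of e] z1(1) \<open>e \<in> Sigo \<union> Siguo\<close> by auto
  ultimately show ?case
    using Cons.IH z1 by auto
qed simp

lemma DeltaH_supervisor_state:
  assumes "est d Sigo S X0 \<beta> \<noteq> {}" and "dstar xi z0 \<beta> = Some z"
  shows "DeltaH xi z = S \<beta>"
proof -
  obtain x0 s where "x0 \<in> X0" "s \<in> closed_loop d Sigo S x0" "proj Sigo s = \<beta>"
    using assms(1) unfolding est_def by blast
  then have "s \<in> CL_lang d Sigo S X0" and "proj Sigo s = \<beta>"
    unfolding CL_lang_def by blast+
  with supervisor_realizes obtain zs where "dstar xi z0 s = Some zs" "DeltaH xi zs = S \<beta>"
    by blast
  moreover from supervisor_run_proj[OF z0_in_Z this(1)] have "zs = z"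
    using \<open>proj Sigo s = \<beta>\<close> assms(2) by simp
  ultimately show ?thesis by simp
qed

lemma est_eq_UR_DeltaH:
  assumes "dstar xi z0 \<beta> = Some z" and "est d Sigo S X0 \<beta> = UR d Siguo (S \<beta>) q"
  shows "est d Sigo S X0 \<beta> = UR d Siguo (DeltaH xi z) q"
proof (cases "q = {}")
  case False
  with assms(2) have "est d Sigo S X0 \<beta> \<noteq> {}" by simp
  with DeltaH_supervisor_state assms(1) have "DeltaH xi z = S \<beta>" by blast
  with assms(2) show ?thesis by simp
qed (use assms(2) in simp)

definition estimate_consistent :: "'e list \<Rightarrow> 'x set \<Rightarrow> 'z option \<Rightarrow> bool" where
  "estimate_consistent \<beta> q zo \<longleftrightarrow> est d Sigo S X0 \<beta> = UR d Siguo (DeltaHo xi zo) q \<and>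
     (\<forall>z. zo = Some z \<longrightarrow> dstar xi z0 \<beta> = Some z)"

fun state_consistent :: "'e list \<Rightarrow> ('x, 'z, 'e) mstate \<Rightarrow> bool" where
  "state_consistent \<beta> (Env q qt zo) = estimate_consistent \<beta> q zo"
| "state_consistent \<beta> (Att q qt z \<sigma>) = (estimate_consistent \<beta> q (Some z) \<and> \<sigma> \<in> Sigo)"

lemma state_consistent_init: "state_consistent [] (M_init X0 z0)"
  using est_eq_UR_DeltaH[of "[]" z0 X0] est_Nil
  by (simp add: M_init_def estimate_consistent_def DeltaHo_def)

lemma tam_snoc: "tam (h @ [e]) = tam h @ tam [e]"
  by (simp add: tam_def)

lemma state_consistent_attack_step:
  assumes "Sigv \<subseteq> Sigo" and consistent: "estimate_consistent \<beta> q (Some z)" and "\<sigma> \<in> Sigo"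
    and step: "fM d Sigo Siguo Sigv xi (Att q qt z \<sigma>) (Hat a) = Some st'"
  shows "state_consistent (\<beta> @ tam [Hat a]) st'"
proof -
  have attack: "Hat a \<in> attV Sigv \<sigma>"
    using step by (auto split: if_splits)
  with assms have observable: "a = Some x \<Longrightarrow> x \<in> Sigo" for x
    by (auto simp: attV_def split: if_splits)
  define U where "U = UR d Siguo (DeltaH xi z) q"
  define q' where "q' = NXo d a U"
  define qt' where "qt' = NX (aug d) \<sigma> (UR (aug d) Siguo (DeltaH xi z) qt)"
  have est_U: "est d Sigo S X0 \<beta> = U" and run_z: "dstar xi z0 \<beta> = Some z"
    using consistent by (simp_all add: estimate_consistent_def DeltaHo_def U_def)
  have "(if q' = {} then Some (Env q' qt' None)
      else case a of None \<Rightarrow> Some (Env q' qt' (Some z))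
        | Some x \<Rightarrow> map_option (\<lambda>z'. Env q' qt' (Some z')) (xi z x)) = Some st'"
    using step unfolding fM.simps Let_def q'_def qt'_def U_def by (simp only: attack if_True)
  then consider (blocked) "q' = {}" "st' = Env q' qt' None"
    | (silent) "q' \<noteq> {}" "a = None" "st' = Env q' qt' (Some z)"
    | (observed) x z' where "q' \<noteq> {}" "a = Some x" "xi z x = Some z'" "st' = Env q' qt' (Some z')"
    by (cases a; cases "q' = {}") auto
  then show ?thesis
  proof cases
    case blocked
    have "est d Sigo S X0 (\<beta> @ tam [Hat a]) = {}"
    proof (cases a)
      case None
      with blocked est_U show ?thesis by (simp add: q'_def NXo_def tam_def)
    next
      case (Some x)
      with blocked est_U observable show ?thesis by (simp add: est_snoc q'_def NXo_def tam_def)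
    qed
    with blocked show ?thesis by (simp add: estimate_consistent_def DeltaHo_def)
  next
    case silent
    with est_U run_z show ?thesis
      by (simp add: estimate_consistent_def DeltaHo_def q'_def NXo_def tam_def U_def UR_idem)
  next
    case (observed x z')
    have "x \<in> Sigo" using observable observed by simp
    have "est d Sigo S X0 \<beta> \<noteq> {}"
      using observed est_U by (auto simp: q'_def NXo_def NX_def)
    then have "DeltaH xi z = S \<beta>"
      using run_z by (rule DeltaH_supervisor_state)
    with observed have "x \<in> S \<beta>" by (auto simp: DeltaH_def)
    with est_snoc[OF \<open>x \<in> Sigo\<close>] est_U observed
    have "est d Sigo S X0 (\<beta> @ [x]) = UR d Siguo (S (\<beta> @ [x])) q'"
      by (simp add: q'_def NXo_def)
    moreover have "dstar xi z0 (\<beta> @ [x]) = Some z'"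
      using run_z observed by (simp add: dstar_snoc)
    ultimately show ?thesis
      using est_eq_UR_DeltaH observed by (simp add: estimate_consistent_def DeltaHo_def tam_def)
  qed
qed

lemma state_consistent_step:
  assumes "Sigv \<subseteq> Sigo" and "state_consistent \<beta> st"
    and step: "fM d Sigo Siguo Sigv xi st e = Some st'"
  shows "state_consistent (\<beta> @ tam [e]) st'"
proof (cases st)
  case (Env q qt zo)
  with step obtain z \<sigma> where "zo = Some z" "e = Obs \<sigma>" "st' = Att q qt z \<sigma>"
    "\<sigma> \<in> Oen (aug d) Sigo Siguo qt (DeltaH xi z)"
    by (cases zo; cases e) (auto split: if_splits)
  with Env assms(2) show ?thesis
    by (simp add: Oen_def tam_def)
next
  case (Att q qt z \<sigma>)
  with step obtain a where "e = Hat a"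
    by (cases e) auto
  from assms(2) Att have "estimate_consistent \<beta> q (Some z)" "\<sigma> \<in> Sigo"
    by simp_all
  from state_consistent_attack_step[OF assms(1) this] step show ?thesis
    unfolding Att \<open>e = Hat a\<close> .
qed

lemma reachable_state_consistent:
  assumes "Sigv \<subseteq> Sigo"
  shows "fMh d Sigo Siguo Sigv xi X0 z0 h = Some st \<Longrightarrow> state_consistent (tam h) st"
proof (induction h arbitrary: st rule: rev_induct)
  case Nil
  then show ?case
    using state_consistent_init by (simp add: fMh_def tam_def)
next
  case (snoc e h)
  then obtain st0 where "fMh d Sigo Siguo Sigv xi X0 z0 h = Some st0"
    "fM d Sigo Siguo Sigv xi st0 e = Some st"
    by (auto simp: fMh_def dstar_snoc bind_eq_Some_conv)
  with snoc.IH state_consistent_step[OF assms] show ?case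
    by (simp add: tam_snoc)
qed

end

theorem proposition1:
  fixes X :: "'x set" and Sigma Sigo Siguo Sigc Siguc Sigv :: "'e set"
    and d :: "'x \<Rightarrow> 'e \<Rightarrow> 'x option" and X0 :: "'x set"
    and S :: "'e list \<Rightarrow> 'e set"
    and Z :: "'z set" and xi :: "'z \<Rightarrow> 'e \<Rightarrow> 'z option" and z0 :: 'z
    and h :: "'e mevent list" and q :: "'x set" and qt :: "('x \<times> 'x) set" and z :: "'z option"
  assumes finX: "finite X" and finSigma: "finite Sigma"
    and d_closed: "\<And>x e y. d x e = Some y \<Longrightarrow> x \<in> X \<and> e \<in> Sigma \<and> y \<in> X"
    and X0_sub: "X0 \<subseteq> X"
    and part_o: "Sigo \<union> Siguo = Sigma" "Sigo \<inter> Siguo = {}"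
    and part_c: "Sigc \<union> Siguc = Sigma" "Sigc \<inter> Siguc = {}"
    and Sigv_sub: "Sigv \<subseteq> Sigo"
    and S_Gamma: "\<And>\<alpha>. \<alpha> \<in> proj Sigo ` gen_lang d X0 \<Longrightarrow> Siguc \<subseteq> S \<alpha> \<and> S \<alpha> \<subseteq> Sigma"
    and z0_Z: "z0 \<in> Z"
    and xi_closed: "\<And>z e z'. z \<in> Z \<Longrightarrow> xi z e = Some z' \<Longrightarrow> e \<in> Sigma \<and> z' \<in> Z"
    and H_unobs: "\<And>z e. z \<in> Z \<Longrightarrow> e \<in> Siguo \<Longrightarrow> xi z e \<noteq> None \<Longrightarrow> xi z e = Some z"
    and H_realizes: "\<And>s. s \<in> CL_lang d Sigo S X0 \<Longrightarrow>
        \<exists>zs. dstar xi z0 s = Some zs \<and> DeltaH xi zs = S (proj Sigo s)"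
    and h_in: "h \<in> Le_M d Sigo Siguo Sigv xi X0 z0"
    and f_h: "fMh d Sigo Siguo Sigv xi X0 z0 h = Some (Env q qt z)"
  shows "est d Sigo S X0 (tam h) = UR d Siguo (DeltaHo xi z) q"
proof -
  interpret realized_supervisor Sigo Siguo d S X0 xi z0 Z
    by unfold_locales (use d_closed part_o z0_Z xi_closed H_unobs H_realizes in blast)+
  from reachable_state_consistent[OF Sigv_sub f_h] show ?thesis
    by (simp add: estimate_consistent_def)
qed

end
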